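(* For every $x\in\Delta\setminus\partial\Delta$, $p(x)=\nabla H\cdot F(x)=2\sum_{i,j\in\mathbb{V}:\,x_{ij}>0}x_{ij}\big(y_{ij}-N_i(x)\big)^2$, where $N_i(x)=\sum_{k:\,x_{ik}>0}\frac{x_{ik}}{x_i}y_{ik}$ and $p(x)=\sum_{i,j,k:\,x_{ij},x_{ik}>0}\frac{x_{ij}x_{ik}}{x_i}(y_{ij}-y_{ik})^2$.
   Context: Let $G=(\mathbb{V},E)$ be a finite graph with adjacency $\sim$. Let $a_{ij}=a_{ji}\ge0$ ($>0$ only if $i\sim j$) and $p_{ij}=p_{ji}\in[0,1]$ ($=0$ if $i\not\sim j$), with some $a_{ij}p_{ij}>0$. Fix $h_1\in(0,1]$; $\Delta$ is the set of arrays $x=(x_{ij})$ with $x_{ij}=x_{ji}\ge0$, $x_{ij}=0$ if $i\not\sim j$, $\sum_{i,j}x_{ij}=1$, $\sum_{(i,j):a_{ij}p_{ij}>0}x_{ij}\ge h_1$; $x_i=\sum_jx_{ij}$. $\partial\Delta$: the $x\in\Delta$ such that some vertex $i$ having a neighbour $j$ with $a_{ij}p_{ij}>0$ has $\sum_{j:a_{ij}p_{ij}>0}x_{ij}=0$. $H(x)=\sum_{(i,j):x_{ij}>0}a_{ij}p_{ij}x_{ij}^2/(x_ix_j)$; $y_{ij}=a_{ij}p_{ij}x_{ij}/(x_ix_j)$ ($0$ if $a_{ij}p_{ij}=0$); $F(x)_{ij}=x_{ij}(y_{ij}-H(x))$ ($0$ if $x_{ij}=0$). $\nabla H\cdot F=\sum_{i,j}\frac{\partial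 H}{\partial x_{ij}}F_{ij}$, with $H$ regarded as a function of the ordered-pair variables $x_{ij}$ ($x_{ij},x_{ji}$ independent, $x_i=\sum_jx_{ij}$). *)

theory Defs
  imports "HOL-Analysis.Analysis"
begin

definition xv :: "('v::finite \<Rightarrow> 'v \<Rightarrow> real) \<Rightarrow> 'v \<Rightarrow> real" where
  "xv x i = (\<Sum>j\<in>UNIV. x i j)"

definition in_Delta ::
  "('v::finite \<Rightarrow> 'v \<Rightarrow> bool) \<Rightarrow> ('v \<Rightarrow> 'v \<Rightarrow> real) \<Rightarrow> ('v \<Rightarrow> 'v \<Rightarrow> real) \<Rightarrow> real
   \<Rightarrow> ('v \<Rightarrow> 'v \<Rightarrow> real) \<Rightarrow> bool" where
  "in_Delta adj a p h1 x \<longleftrightarrow>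
     (\<forall>i j. x i j = x j i) \<and> (\<forall>i j. 0 \<le> x i j) \<and> (\<forall>i j. \<not> adj i j \<longrightarrow> x i j = 0) \<and>
     (\<Sum>i\<in>UNIV. \<Sum>j\<in>UNIV. x i j) = 1 \<and>
     (\<Sum>(i,j)\<in>{(i,j). a i j * p i j > 0}. x i j) \<ge> h1"

definition in_bdry_Delta ::
  "('v::finite \<Rightarrow> 'v \<Rightarrow> bool) \<Rightarrow> ('v \<Rightarrow> 'v \<Rightarrow> real) \<Rightarrow> ('v \<Rightarrow> 'v \<Rightarrow> real) \<Rightarrow> real
   \<Rightarrow> ('v \<Rightarrow> 'v \<Rightarrow> real) \<Rightarrow> bool" where
  "in_bdry_Delta adj a p h1 x \<longleftrightarrow> in_Delta adj a p h1 x \<and>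
     (\<exists>i. (\<exists>j. adj i j \<and> a i j * p i j > 0) \<and> (\<Sum>j\<in>{j. a i j * p i j > 0}. x i j) = 0)"

definition Hf :: "('v::finite \<Rightarrow> 'v \<Rightarrow> real) \<Rightarrow> ('v \<Rightarrow> 'v \<Rightarrow> real) \<Rightarrow> ('v \<Rightarrow> 'v \<Rightarrow> real) \<Rightarrow> real" where
  "Hf a p x = (\<Sum>(i,j)\<in>{(i,j). x i j > 0}. a i j * p i j * (x i j)^2 / (xv x i * xv x j))"

definition yf :: "('v::finite \<Rightarrow> 'v \<Rightarrow> real) \<Rightarrow> ('v \<Rightarrow> 'v \<Rightarrow> real) \<Rightarrow> ('v \<Rightarrow> 'v \<Rightarrow> real) \<Rightarrow> 'v \<Rightarrow> 'v \<Rightarrow> real" where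
  "yf a p x i j = (if a i j * p i j = 0 then 0 else a i j * p i j * x i j / (xv x i * xv x j))"

definition Ff :: "('v::finite \<Rightarrow> 'v \<Rightarrow> real) \<Rightarrow> ('v \<Rightarrow> 'v \<Rightarrow> real) \<Rightarrow> ('v \<Rightarrow> 'v \<Rightarrow> real) \<Rightarrow> 'v \<Rightarrow> 'v \<Rightarrow> real" where
  "Ff a p x i j = (if x i j = 0 then 0 else x i j * (yf a p x i j - Hf a p x))"

definition Nf :: "('v::finite \<Rightarrow> 'v \<Rightarrow> real) \<Rightarrow> ('v \<Rightarrow> 'v \<Rightarrow> real) \<Rightarrow> ('v \<Rightarrow> 'v \<Rightarrow> real) \<Rightarrow> 'v \<Rightarrow> real" where
  "Nf a p x i = (\<Sum>k\<in>{k. x i k > 0}. x i k / xv x i * yf a p x i k)"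

definition pf :: "('v::finite \<Rightarrow> 'v \<Rightarrow> real) \<Rightarrow> ('v \<Rightarrow> 'v \<Rightarrow> real) \<Rightarrow> ('v \<Rightarrow> 'v \<Rightarrow> real) \<Rightarrow> real" where
  "pf a p x = (\<Sum>(i,j,k)\<in>{(i,j,k). x i j > 0 \<and> x i k > 0}.
                 x i j * x i k / xv x i * (yf a p x i j - yf a p x i k)^2)"

text \<open>Partial derivative of H with respect to the ordered-pair variable x_ij
  (all other x_kl fixed, x_i = sum_j x_ij recomputed).\<close>
definition dHf :: "('v::finite \<Rightarrow> 'v \<Rightarrow> real) \<Rightarrow> ('v \<Rightarrow> 'v \<Rightarrow> real) \<Rightarrow> ('v \<Rightarrow> 'v \<Rightarrow> real) \<Rightarrow> 'v \<Rightarrow> 'v \<Rightarrow> real" where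
  "dHf a p x i j = deriv (\<lambda>t. Hf a p (x(i := (x i)(j := t)))) (x i j)"

definition gradH_dot_F :: "('v::finite \<Rightarrow> 'v \<Rightarrow> real) \<Rightarrow> ('v \<Rightarrow> 'v \<Rightarrow> real) \<Rightarrow> ('v \<Rightarrow> 'v \<Rightarrow> real) \<Rightarrow> real" where
  "gradH_dot_F a p x = (\<Sum>i\<in>UNIV. \<Sum>j\<in>UNIV. dHf a p x i j * Ff a p x i j)"

end

theory Submission
  imports Defs
begin

text \<open>Both quantities are weighted variances. Fix a vertex i and weight each neighbour j
  with x_ij > 0 by x_ij; then N_i is the weighted mean of the y_ij. The triple sum p is the
  pairwise form sum_jk w_j w_k (y_j - y_k)^2 / W = 2 sum_j w_j (y_j - N)^2 of the variance.
  Differentiating H in x_ij, which also moves x_i, gives dH/dx_ij = 2 y_ij - 2 N_i by symmetry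
  of a, p and x; as the deviations y_ij - N_i have weighted sum zero,
  sum_j x_ij (y_ij - N_i) (y_ij - H) is again the variance.\<close>

definition weighted_mean :: "('a \<Rightarrow> real) \<Rightarrow> ('a \<Rightarrow> real) \<Rightarrow> 'a set \<Rightarrow> real" where
  "weighted_mean w y A = (\<Sum>k\<in>A. w k / sum w A * y k)"

lemma sum_weighted_deviation_eq_0:
  assumes "finite A" "\<And>j. j \<in> A \<Longrightarrow> 0 < w j"
  shows "(\<Sum>j\<in>A. w j * (y j - weighted_mean w y A)) = 0"
proof (cases "A = {}")
  case False
  then have "sum w A > 0" using assms by (simp add: sum_pos)
  then have "weighted_mean w y A * sum w A = (\<Sum>j\<in>A. w j * y j)"
    unfolding weighted_mean_def sum_distrib_right by (intro sum.cong) auto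
  then show ?thesis
    by (simp add: right_diff_distrib sum_subtractf sum_distrib_right[symmetric] mult.commute)
qed simp

lemma sum_weighted_deviation_mult:
  assumes "finite A" "\<And>j. j \<in> A \<Longrightarrow> 0 < w j"
  shows "(\<Sum>j\<in>A. w j * (y j - weighted_mean w y A) * (y j - c))
       = (\<Sum>j\<in>A. w j * (y j - weighted_mean w y A)^2)"
proof -
  let ?N = "weighted_mean w y A"
  have "(\<Sum>j\<in>A. w j * (y j - ?N) * (y j - c))
      = (\<Sum>j\<in>A. w j * (y j - ?N)^2) + (?N - c) * (\<Sum>j\<in>A. w j * (y j - ?N))"
    by (simp add: sum_distrib_left sum.distrib[symmetric] power2_eq_square algebra_simps)
  then show ?thesis using sum_weighted_deviation_eq_0[OF assms] by simp
qed

lemma sum_pairwise_sq_diff_eq_weighted_variance: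
  assumes "finite A" "\<And>j. j \<in> A \<Longrightarrow> 0 < w j"
  shows "(\<Sum>j\<in>A. \<Sum>k\<in>A. w j * w k / sum w A * (y j - y k)^2)
       = 2 * (\<Sum>j\<in>A. w j * (y j - weighted_mean w y A)^2)"
proof (cases "A = {}")
  case False
  define W where "W = sum w A"
  define z where "z j = y j - weighted_mean w y A" for j
  have "W > 0" using False assms by (simp add: W_def sum_pos)
  have half: "(\<Sum>j\<in>A. \<Sum>k\<in>A. w j * w k / W * (z j)^2) = (\<Sum>j\<in>A. w j * (z j)^2)"
    using \<open>W > 0\<close> by (simp add: sum_distrib_left[symmetric] sum_divide_distrib[symmetric]
          sum_distrib_right[symmetric] W_def mult.commute mult.left_commute)
  have cross: "(\<Sum>j\<in>A. \<Sum>k\<in>A. w j * w k / W * (z j * z k)) = (\<Sum>j\<in>A. w j * z j)^2 / W"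
    by (simp add: power2_eq_square sum_distrib_left sum_distrib_right sum_divide_distrib algebra_simps)
  have "(\<Sum>j\<in>A. \<Sum>k\<in>A. w j * w k / W * (y j - y k)^2)
      = (\<Sum>j\<in>A. \<Sum>k\<in>A. w j * w k / W * (z j)^2) + (\<Sum>k\<in>A. \<Sum>j\<in>A. w k * w j / W * (z k)^2)
        - 2 * (\<Sum>j\<in>A. \<Sum>k\<in>A. w j * w k / W * (z j * z k))"
    by (subst sum.swap[of _ A A])
       (simp add: z_def sum_distrib_left sum.distrib[symmetric] sum_subtractf[symmetric]
          power2_eq_square algebra_simps)
  also have "\<dots> = 2 * (\<Sum>j\<in>A. w j * (z j)^2)"
    using half cross sum_weighted_deviation_eq_0[OF assms, where y = y] by (simp add: z_def)
  finally show ?thesis by (simp add: W_def z_def)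
qed simp

lemma sum_pairs_eq_sum_sum:
  fixes f :: "'v::finite \<Rightarrow> 'v \<Rightarrow> real"
  shows "(\<Sum>(i,j)\<in>{(i,j). P i j}. f i j) = (\<Sum>i\<in>UNIV. \<Sum>j\<in>{j. P i j}. f i j)"
proof -
  have "{(i,j). P i j} = Sigma UNIV (\<lambda>i. {j. P i j})" by auto
  then show ?thesis by (simp add: sum.Sigma)
qed

lemma sum_triples_eq_sum_sum_sum:
  fixes f :: "'v::finite \<Rightarrow> 'v \<Rightarrow> 'v \<Rightarrow> real"
  shows "(\<Sum>(i,j,k)\<in>{(i,j,k). P i j \<and> P i k}. f i j k)
       = (\<Sum>i\<in>UNIV. \<Sum>j\<in>{j. P i j}. \<Sum>k\<in>{k. P i k}. f i j k)"
proof -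
  have "{(i,j,k). P i j \<and> P i k} = Sigma UNIV (\<lambda>i. {j. P i j} \<times> {k. P i k})" by auto
  then show ?thesis by (simp add: sum.Sigma split_def sum.cartesian_product)
qed

lemma xv_eq_sum_support:
  assumes "\<And>k l. 0 \<le> x k l"
  shows "xv x k = sum (x k) {l. 0 < x k l}"
  unfolding xv_def using assms by (intro sum.mono_neutral_right) (auto simp: less_le)

lemma xv_pos:
  assumes "\<And>k l. 0 \<le> x k l" and "0 < x k l"
  shows "0 < xv x k"
proof -
  have "x k l \<le> xv x k" unfolding xv_def using assms(1) by (intro member_le_sum) auto
  then show ?thesis using assms(2) by simp
qed

lemma yf_eq: "yf a p x k l = a k l * p k l * x k l / (xv x k * xv x l)"
  by (simp add: yf_def)

lemma yf_sym:
  assumes "\<And>k l. a k l = a l k" "\<And>k l. p k l = p l k" "\<And>k l. x k l = x l k"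
  shows "yf a p x k l = yf a p x l k"
  by (simp add: yf_eq assms mult.commute)

lemma Nf_eq_weighted_mean:
  assumes "\<And>k l. 0 \<le> x k l"
  shows "Nf a p x i = weighted_mean (x i) (yf a p x i) {j. 0 < x i j}"
  by (simp add: Nf_def weighted_mean_def xv_eq_sum_support[OF assms])

lemma has_real_derivative_sq_div_mult:
  fixes c f d u v e e' t0 :: real
  assumes "u \<noteq> 0" "v \<noteq> 0"
  shows "((\<lambda>t. c * (f + d * (t - t0))^2 / ((u + e * (t - t0)) * (v + e' * (t - t0))))
          has_real_derivative c * f / (u * v) * (2 * d - f * (e / u + e' / v))) (at t0)"
  using assms
  by (auto intro!: derivative_eq_intros simp: field_simps power2_eq_square)

lemma fun_upd_coordinate:
  fixes x :: "'a \<Rightarrow> 'b \<Rightarrow> real"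
  shows "(x(i := (x i)(j := t))) k l = x k l + of_bool (k = i \<and> l = j) * (t - x i j)"
  by auto

lemma xv_fun_upd:
  "xv (x(i := (x i)(j := t))) k = xv x k + of_bool (k = i) * (t - x i j)"
  by (simp add: xv_def sum.remove[of UNIV j] algebra_simps)

lemma has_real_derivative_Hf_coordinate:
  assumes sym: "\<And>k l. x k l = x l k" and nonneg: "\<And>k l. 0 \<le> x k l" and pos: "0 < x i j"
  shows "((\<lambda>t. Hf a p (x(i := (x i)(j := t)))) has_real_derivative
           (\<Sum>(k,l)\<in>{(k,l). 0 < x k l}. yf a p x k l *
              (2 * of_bool (k = i \<and> l = j) - x k l * (of_bool (k = i) / xv x k + of_bool (l = i) / xv x l))))
         (at (x i j))"
proof -
  define S where "S = {(k,l). 0 < x k l}"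
  define G where "G t = (\<Sum>(k,l)\<in>S. a k l * p k l * (x k l + of_bool (k = i \<and> l = j) * (t - x i j))^2
      / ((xv x k + of_bool (k = i) * (t - x i j)) * (xv x l + of_bool (l = i) * (t - x i j))))" for t
  \<comment> \<open>H is the rational function G only for t > 0, where the support of x is unchanged\<close>
  have Hf_eq_G: "Hf a p (x(i := (x i)(j := t))) = G t" if "0 < t" for t
  proof -
    have "{(k,l). 0 < (x(i := (x i)(j := t))) k l} = S"
      using that pos by (auto simp: S_def split: if_splits)
    then show ?thesis
      unfolding Hf_def G_def xv_fun_upd
      by (intro sum.cong refl) (auto simp only: fun_upd_coordinate split: prod.splits)
  qed
  have G_deriv: "(G has_real_derivative (\<Sum>(k,l)\<in>S. yf a p x k l *
      (2 * of_bool (k = i \<and> l = j) - x k l * (of_bool (k = i) / xv x k + of_bool (l = i) / xv x l))))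
      (at (x i j))"
    unfolding G_def yf_eq
  proof (intro DERIV_sum, clarify)
    fix k l assume "(k, l) \<in> S"
    then have "0 < x k l" "0 < x l k"
      using sym by (auto simp: S_def)
    then have "0 < xv x k" "0 < xv x l"
      using xv_pos[where x = x, OF nonneg] by blast+
    then show "((\<lambda>t. a k l * p k l * (x k l + of_bool (k = i \<and> l = j) * (t - x i j))\<^sup>2 /
        ((xv x k + of_bool (k = i) * (t - x i j)) * (xv x l + of_bool (l = i) * (t - x i j))))
      has_real_derivative (a k l * p k l * x k l / (xv x k * xv x l) *
        (2 * of_bool (k = i \<and> l = j) - x k l * (of_bool (k = i) / xv x k + of_bool (l = i) / xv x l))))
      (at (x i j))"
      by (intro has_real_derivative_sq_div_mult) auto
  qed
  show ?thesis
    unfolding S_def[symmetric]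
    by (rule has_field_derivative_transform_within_open[OF G_deriv, where S = "{0<..}"])
       (use pos Hf_eq_G in auto)
qed

lemma dHf_eq:
  assumes a_sym: "\<And>k l. a k l = a l k" and p_sym: "\<And>k l. p k l = p l k"
    and sym: "\<And>k l. x k l = x l k" and nonneg: "\<And>k l. 0 \<le> x k l" and pos: "0 < x i j"
  shows "dHf a p x i j = 2 * yf a p x i j - 2 * Nf a p x i"
proof -
  define S where "S = {(k,l). 0 < x k l}"
  let ?y = "yf a p x"
  have "dHf a p x i j = (\<Sum>(k,l)\<in>S. ?y k l *
      (2 * of_bool (k = i \<and> l = j) - x k l * (of_bool (k = i) / xv x k + of_bool (l = i) / xv x l)))"
    unfolding dHf_def S_def
    by (rule DERIV_imp_deriv[OF has_real_derivative_Hf_coordinate[where x = x, OF sym nonneg pos]])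
  also have "\<dots> = 2 * (\<Sum>(k,l)\<in>S. of_bool (k = i \<and> l = j) * ?y k l)
      - (\<Sum>(k,l)\<in>S. of_bool (k = i) * (x k l / xv x k * ?y k l))
      - (\<Sum>(k,l)\<in>S. of_bool (l = i) * (x k l / xv x l * ?y k l))"
    by (simp only: sum_subtractf[symmetric] sum_distrib_left, intro sum.cong refl)
       (auto simp: algebra_simps)
  also have "(\<Sum>(k,l)\<in>S. of_bool (k = i \<and> l = j) * ?y k l) = (\<Sum>n\<in>S. if n = (i,j) then ?y i j else 0)"
    by (intro sum.cong refl) auto
  also have "\<dots> = ?y i j"
    using pos by (simp add: S_def)
  also have "(\<Sum>(k,l)\<in>S. of_bool (l = i) * (x k l / xv x l * ?y k l))
      = (\<Sum>(k,l)\<in>S. of_bool (k = i) * (x k l / xv x k * ?y k l))"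
    using sym yf_sym[where a = a and p = p and x = x, OF a_sym p_sym sym]
    by (intro sum.reindex_bij_witness[of S prod.swap prod.swap]) (auto simp: S_def)
  also have "(\<Sum>(k,l)\<in>S. of_bool (k = i) * (x k l / xv x k * ?y k l))
      = (\<Sum>k\<in>UNIV. of_bool (k = i) * (\<Sum>l\<in>{l. 0 < x k l}. x k l / xv x k * ?y k l))"
    unfolding S_def sum_pairs_eq_sum_sum sum_distrib_left ..
  also have "\<dots> = Nf a p x i"
    by (simp add: Nf_def)
  finally show ?thesis by simp
qed

lemma pf_eq_weighted_variance:
  assumes nonneg: "\<And>k l. 0 \<le> x k l"
  shows "pf a p x = 2 * (\<Sum>(i,j)\<in>{(i,j). 0 < x i j}. x i j * (yf a p x i j - Nf a p x i)^2)"
proof -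
  have "pf a p x = (\<Sum>i\<in>UNIV. \<Sum>j\<in>{j. 0 < x i j}. \<Sum>k\<in>{k. 0 < x i k}.
      x i j * x i k / sum (x i) {l. 0 < x i l} * (yf a p x i j - yf a p x i k)^2)"
    unfolding pf_def sum_triples_eq_sum_sum_sum xv_eq_sum_support[where x = x, OF nonneg] ..
  also have "\<dots> = (\<Sum>i\<in>UNIV. 2 * (\<Sum>j\<in>{j. 0 < x i j}. x i j * (yf a p x i j - Nf a p x i)^2))"
    unfolding Nf_eq_weighted_mean[where x = x, OF nonneg]
    by (intro sum.cong refl arg_cong[where f = "(*) 2"] sum_pairwise_sq_diff_eq_weighted_variance) auto
  finally show ?thesis by (simp add: sum_pairs_eq_sum_sum sum_distrib_left)
qed

lemma gradH_dot_F_eq_weighted_variance: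
  assumes "\<And>k l. a k l = a l k" "\<And>k l. p k l = p l k"
    and "\<And>k l. x k l = x l k" and nonneg: "\<And>k l. 0 \<le> x k l"
  shows "gradH_dot_F a p x
       = 2 * (\<Sum>(i,j)\<in>{(i,j). 0 < x i j}. x i j * (yf a p x i j - Nf a p x i)^2)"
proof -
  have "gradH_dot_F a p x = (\<Sum>i\<in>UNIV. \<Sum>j\<in>{j. 0 < x i j}. dHf a p x i j * Ff a p x i j)"
    unfolding gradH_dot_F_def
    by (intro sum.cong refl sum.mono_neutral_right) (auto simp: Ff_def less_le nonneg)
  also have "\<dots> = (\<Sum>i\<in>UNIV. 2 * (\<Sum>j\<in>{j. 0 < x i j}.
      x i j * (yf a p x i j - Nf a p x i) * (yf a p x i j - Hf a p x)))"
    by (intro sum.cong refl)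
       (auto simp: sum_distrib_left Ff_def dHf_eq[where a = a and p = p and x = x, OF assms] algebra_simps)
  also have "\<dots> = (\<Sum>i\<in>UNIV. 2 * (\<Sum>j\<in>{j. 0 < x i j}. x i j * (yf a p x i j - Nf a p x i)^2))"
    unfolding Nf_eq_weighted_mean[where x = x, OF nonneg]
    by (intro sum.cong refl arg_cong[where f = "(*) 2"] sum_weighted_deviation_mult) auto
  finally show ?thesis by (simp add: sum_pairs_eq_sum_sum sum_distrib_left)
qed

theorem lemma2:
  fixes adj :: "'v::finite \<Rightarrow> 'v \<Rightarrow> bool"
    and a p x :: "'v \<Rightarrow> 'v \<Rightarrow> real" and h1 :: real
  assumes adj_sym: "\<And>i j. adj i j \<longleftrightarrow> adj j i"
    and a_sym: "\<And>i j. a i j = a j i" and a_nonneg: "\<And>i j. 0 \<le> a i j"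
    and a_adj: "\<And>i j. a i j > 0 \<Longrightarrow> adj i j"
    and p_sym: "\<And>i j. p i j = p j i" and p_range: "\<And>i j. 0 \<le> p i j \<and> p i j \<le> 1"
    and p_adj: "\<And>i j. \<not> adj i j \<Longrightarrow> p i j = 0"
    and ap_pos: "\<exists>i j. a i j * p i j > 0"
    and h1: "0 < h1" "h1 \<le> 1"
    and xD: "in_Delta adj a p h1 x"
    and x_nb: "\<not> in_bdry_Delta adj a p h1 x"
  shows "pf a p x = gradH_dot_F a p x \<and>
         gradH_dot_F a p x =
           2 * (\<Sum>(i,j)\<in>{(i,j). x i j > 0}. x i j * (yf a p x i j - Nf a p x i)^2)"
proof -
  \<comment> \<open>Only symmetry of a, p, x and nonnegativity of x matter: all sums run over the
    support of x, where x_i and x_j are automatically positive.\<close>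
  have x_sym: "\<And>k l. x k l = x l k" and x_nonneg: "\<And>k l. 0 \<le> x k l"
    using xD by (auto simp: in_Delta_def)
  show ?thesis
    using pf_eq_weighted_variance[where x = x, OF x_nonneg]
      gradH_dot_F_eq_weighted_variance[where a = a and p = p and x = x, OF a_sym p_sym x_sym x_nonneg]
    by simp
qed

end
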